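(* Let $\Sigma$ be a finite alphabet, let $\mathbf{w}$ be a right-infinite word over $\Sigma$, and let $L_{\mathbf w}$ be its Lie complexity function and $p_{\mathbf w}$ its factor complexity function. Then for each $n\ge 1$, $$L_{\mathbf w}(n)\le p_{\mathbf w}(n)-p_{\mathbf w}(n-1)+1.$$ In particular, if $\mathbf w$ has linear factor complexity, then $L_{\mathbf w}(n)$ is bounded above by a constant independent of $n$.
   Context: A factor of $\mathbf w$ is a finite block of contiguous symbols of $\mathbf w$ (the empty word included); $\mathrm{Fac}(\mathbf w)$ is the set of factors. The factor complexity $p_{\mathbf w}(n)$ is the number of distinct factors of $\mathbf w$ of length $n$ (so $p_{\mathbf w}(0)=1$). Two words are cyclically equivalent ($v\sim_C v'$) if each is a cyclic shift (conjugate) of the other; $[v]_C$ denotes the class of $v$. The Lie complexity is $L_{\mathbf w}(n)=\#\{[v]_C : |v|=n,\ [v]_C\subseteq \mathrm{Fac}(\mathbf w)\}$, i.e. the number of cyclic classes of length-$n$ words all of whose members are factors of $\mathbf w$. $\mathbf w$ has linear factor complexity if there are constants $A,B$ with $p_{\mathbf w}(n)\le An+B$ for all $n$. *)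

theory Defs
  imports Complex_Main
begin

definition factors :: "(nat \<Rightarrow> 'a) \<Rightarrow> 'a list set" where
  "factors w = {v. \<exists>i. v = map w [i..<i + length v]}"

definition factor_complexity :: "(nat \<Rightarrow> 'a) \<Rightarrow> nat \<Rightarrow> nat" where
  "factor_complexity w n = card {v \<in> factors w. length v = n}"

definition cyc_class :: "'a list \<Rightarrow> 'a list set" where
  "cyc_class v = {rotate k v | k. True}"

definition lie_complexity :: "(nat \<Rightarrow> 'a) \<Rightarrow> nat \<Rightarrow> nat" where
  "lie_complexity w n =
     card {C. \<exists>v. length v = n \<and> C = cyc_class v \<and> C \<subseteq> factors w}"

definition linear_factor_complexity :: "(nat \<Rightarrow> 'a) \<Rightarrow> bool" where
  "linear_factor_complexity w \<longleftrightarrow>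
     (\<exists>A B::real. \<forall>n. real (factor_complexity w n) \<le> A * real n + B)"

end

theory Submission
  imports Defs
begin

text \<open>
  Call a factor \<open>a u\<close> of length \<open>m\<close> a first-occurrence extension if \<open>u\<close> first occurs at a
  position \<open>i > 0\<close> and \<open>a = w (i - 1)\<close>. Every factor of length \<open>m - 1\<close> other than the prefix
  of \<open>w\<close> yields one, so there are at least \<open>p(m - 1) - 1\<close> of them, and for each the prefix of
  length \<open>m - 1\<close> first occurs strictly before the suffix \<open>u\<close>. In a cyclic class the suffix of
  each word is the prefix of the next rotation, so first occurrences of prefixes cannot increase
  all the way around: every class of factors contains a word that is not a first-occurrence
  extension, whence \<open>L(n) \<le> p(n) - p(n - 1) + 1\<close>.

  For the boundedness, classes of words with a period at most \<open>n/4\<close> are already separated by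
  their prefixes of any length \<open>m \<ge> n/2\<close>, so the same count applies at each such \<open>m\<close> and
  telescopes to at most \<open>2 p(n)/n + 1\<close> such classes; every other class has more than \<open>n/4\<close>
  elements, so there are at most \<open>4 p(n)/n\<close> of them.
\<close>

definition first_occ :: "(nat \<Rightarrow> 'a) \<Rightarrow> 'a list \<Rightarrow> nat" where
  "first_occ w u = (LEAST i. map w [i..<i + length u] = u)"

definition factors_of_length :: "(nat \<Rightarrow> 'a) \<Rightarrow> nat \<Rightarrow> 'a list set" where
  "factors_of_length w n = {v \<in> factors w. length v = n}"

lemma factor_complexity_eq_card: "factor_complexity w n = card (factors_of_length w n)"
  unfolding factor_complexity_def factors_of_length_def ..

lemma factorsI: "map w [i..<i + length v] = v \<Longrightarrow> v \<in> factors w"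
  unfolding factors_def by (auto intro: sym)

lemma map_upt_in_factors: "map w [i..<i + n] \<in> factors w"
  by (rule factorsI) simp

lemma factorsE:
  assumes "v \<in> factors w" obtains i where "map w [i..<i + length v] = v"
proof -
  obtain i where "v = map w [i..<i + length v]"
    using assms unfolding factors_def by blast
  then show thesis
    by (rule that[OF sym])
qed

lemma map_first_occ: "v \<in> factors w \<Longrightarrow> map w [first_occ w v..<first_occ w v + length v] = v"
  unfolding first_occ_def by (erule factorsE) (rule LeastI)

lemma first_occ_le: "map w [i..<i + length v] = v \<Longrightarrow> first_occ w v \<le> i"
  unfolding first_occ_def by (rule Least_le)

lemma take_in_factors:
  assumes "v \<in> factors w" shows "take m v \<in> factors w"
proof -
  obtain i where v: "map w [i..<i + length v] = v" using assms by (rule factorsE)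
  have "map w [i..<i + length (take m v)] = take m (map w [i..<i + length v])"
    by (simp add: take_map min_def)
  then show ?thesis using v by (metis factorsI)
qed

lemma finite_factors_of_length:
  assumes "finite \<Sigma>" "\<forall>i. w i \<in> \<Sigma>" shows "finite (factors_of_length w n)"
proof (rule finite_subset)
  show "factors_of_length w n \<subseteq> {xs. set xs \<subseteq> \<Sigma> \<and> length xs = n}"
    using assms(2) by (auto simp: factors_of_length_def elim!: factorsE) (metis imageE set_map)
  show "finite {xs. set xs \<subseteq> \<Sigma> \<and> length xs = n}"
    using assms(1) by (rule finite_lists_length_eq)
qed

definition first_occ_left_exts :: "(nat \<Rightarrow> 'a) \<Rightarrow> nat \<Rightarrow> 'a list set" where
  "first_occ_left_exts w m =
     (\<lambda>u. map w [first_occ w u - 1..<first_occ w u - 1 + m]) `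
       {u \<in> factors_of_length w (m - 1). 0 < first_occ w u}"

lemma first_occ_left_exts_subset: "first_occ_left_exts w m \<subseteq> factors_of_length w m"
proof
  fix x assume "x \<in> first_occ_left_exts w m"
  then obtain i where "x = map w [i..<i + m]"
    unfolding first_occ_left_exts_def by blast
  then show "x \<in> factors_of_length w m"
    unfolding factors_of_length_def using map_upt_in_factors by simp
qed

lemma drop_first_occ_left_ext:
  assumes "u \<in> factors_of_length w (m - 1)" "0 < first_occ w u" "1 \<le> m"
  shows "drop 1 (map w [first_occ w u - 1..<first_occ w u - 1 + m]) = u"
  using assms map_first_occ[of u w] by (simp add: factors_of_length_def drop_map)

lemma first_occ_prefix_less_suffix:
  assumes "x \<in> first_occ_left_exts w m" "1 \<le> m"
  shows "first_occ w (take (m - 1) x) < first_occ w (drop 1 x)"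
proof -
  obtain u where u: "u \<in> factors_of_length w (m - 1)" "0 < first_occ w u"
    and x: "x = map w [first_occ w u - 1..<first_occ w u - 1 + m]"
    using assms(1) unfolding first_occ_left_exts_def by blast
  have "map w [first_occ w u - 1..<first_occ w u - 1 + length (take (m - 1) x)] = take (m - 1) x"
    using x assms(2) by (simp add: take_map)
  then have "first_occ w (take (m - 1) x) \<le> first_occ w u - 1"
    by (rule first_occ_le)
  then show ?thesis
    using drop_first_occ_left_ext[OF u assms(2)] u(2) x by simp
qed

lemma card_factors_le_card_left_exts:
  assumes "1 \<le> m" "finite (factors_of_length w (m - 1))"
  shows "card (factors_of_length w (m - 1)) \<le> card (first_occ_left_exts w m) + 1"
proof -
  define E where "E = {u \<in> factors_of_length w (m - 1). 0 < first_occ w u}"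
  have "inj_on (\<lambda>u. map w [first_occ w u - 1..<first_occ w u - 1 + m]) E"
  proof (rule inj_on_inverseI[where g = "drop 1"])
    show "drop 1 (map w [first_occ w u - 1..<first_occ w u - 1 + m]) = u" if "u \<in> E" for u
      using that drop_first_occ_left_ext[OF _ _ assms(1)] unfolding E_def by blast
  qed
  then have card_E: "card (first_occ_left_exts w m) = card E"
    unfolding first_occ_left_exts_def E_def[symmetric] by (rule card_image)
  have "factors_of_length w (m - 1) \<subseteq> insert (map w [0..<m - 1]) E"
  proof
    fix u assume u: "u \<in> factors_of_length w (m - 1)"
    show "u \<in> insert (map w [0..<m - 1]) E"
    proof (cases "first_occ w u = 0")
      case True
      then show ?thesis
        using map_first_occ[of u w] u by (simp add: factors_of_length_def)
    next
      case False
      then show ?thesis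
        using u by (simp add: E_def)
    qed
  qed
  then have "card (factors_of_length w (m - 1)) \<le> card (insert (map w [0..<m - 1]) E)"
    using assms(2) by (intro card_mono) (auto simp: E_def)
  also have "\<dots> \<le> card E + 1"
    by (cases "finite E") (simp_all add: card_insert_if)
  finally show ?thesis using card_E by simp
qed

definition shift_closed :: "nat \<Rightarrow> 'a list set \<Rightarrow> bool" where
  "shift_closed m X \<longleftrightarrow> (\<forall>x\<in>X. \<exists>y\<in>X. take (m - 1) y = drop 1 x)"

text \<open>Follow the shift from an element whose prefix occurs last: a left extension would make
  the next prefix occur even later.\<close>
lemma shift_closed_not_subset_left_exts:
  assumes "1 \<le> m" "finite X" "X \<noteq> {}" "shift_closed m X"
  shows "\<not> X \<subseteq> first_occ_left_exts w m"
proof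
  assume sub: "X \<subseteq> first_occ_left_exts w m"
  define g where "g x = first_occ w (take (m - 1) x)" for x
  have "Max (g ` X) \<in> g ` X"
    using assms(2,3) by simp
  then obtain x where x: "x \<in> X" "g x = Max (g ` X)"
    by (auto simp del: Max_in)
  obtain y where y: "y \<in> X" "take (m - 1) y = drop 1 x"
    using assms(4) x(1) unfolding shift_closed_def by blast
  have "x \<in> first_occ_left_exts w m"
    using sub x(1) by blast
  then have "g x < g y"
    using first_occ_prefix_less_suffix[OF _ assms(1)] y(2) unfolding g_def by simp
  moreover have "g y \<le> g x"
    using assms(2) x(2) y(1) by simp
  ultimately show False by simp
qed

lemma card_shift_closed_family_le:
  assumes "1 \<le> m" "finite (factors_of_length w m)" "finite (factors_of_length w (m - 1))"
    and X: "\<And>i. i \<in> I \<Longrightarrow> X i \<subseteq> factors_of_length w m \<and> X i \<noteq> {} \<and> shift_closed m (X i)"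
    and disj: "\<And>i j x. i \<in> I \<Longrightarrow> j \<in> I \<Longrightarrow> x \<in> X i \<Longrightarrow> x \<in> X j \<Longrightarrow> i = j"
  shows "int (card I) \<le> int (factor_complexity w m) - int (factor_complexity w (m - 1)) + 1"
proof -
  let ?F = "factors_of_length w m" and ?T = "first_occ_left_exts w m"
  define h where "h i = (SOME x. x \<in> X i - ?T)" for i
  have h: "h i \<in> X i - ?T" if "i \<in> I" for i
    unfolding h_def
  proof (rule someI_ex)
    have "finite (X i)"
      using X[OF that] assms(2) by (meson finite_subset)
    then show "\<exists>x. x \<in> X i - ?T"
      using shift_closed_not_subset_left_exts[OF assms(1), of "X i" w] X[OF that] by blast
  qed
  have "inj_on h I"
  proof (rule inj_onI)
    fix i j assume ij: "i \<in> I" "j \<in> I" "h i = h j"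
    have "h i \<in> X i" "h i \<in> X j"
      using h[OF ij(1)] h[OF ij(2)] ij(3) by simp_all
    then show "i = j"
      using disj[OF ij(1,2)] by simp
  qed
  moreover have "h ` I \<subseteq> ?F - ?T"
  proof (rule image_subsetI)
    fix i assume "i \<in> I"
    then show "h i \<in> ?F - ?T"
      using h[of i] X[of i] by auto
  qed
  ultimately have "card I \<le> card (?F - ?T)"
    using assms(2) by (intro card_inj_on_le[of h]) auto
  also have "\<dots> = card ?F - card ?T"
    using assms(2) by (meson card_Diff_subset finite_subset first_occ_left_exts_subset)
  finally have "card I \<le> card ?F - card ?T" .
  moreover have "card ?T \<le> card ?F"
    using assms(2) first_occ_left_exts_subset by (rule card_mono)
  moreover have "card (factors_of_length w (m - 1)) \<le> card ?T + 1"
    using assms(1,3) by (rule card_factors_le_card_left_exts)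
  ultimately show ?thesis
    unfolding factor_complexity_eq_card by linarith
qed

lemma mem_cyc_class_self: "v \<in> cyc_class v"
  unfolding cyc_class_def by (metis (mono_tags) mem_Collect_eq rotate0 id_apply)

lemma length_mem_cyc_class: "x \<in> cyc_class v \<Longrightarrow> length x = length v"
  unfolding cyc_class_def by auto

lemma rotate_mem_cyc_class: "x \<in> cyc_class v \<Longrightarrow> rotate k x \<in> cyc_class v"
  unfolding cyc_class_def by (auto simp: rotate_rotate)

lemma cyc_class_eq:
  assumes "y \<in> cyc_class v" shows "cyc_class y = cyc_class v"
proof
  show "cyc_class y \<subseteq> cyc_class v"
    using rotate_mem_cyc_class[OF assms] unfolding cyc_class_def by blast
  obtain k where y: "y = rotate k v"
    using assms unfolding cyc_class_def by blast
  have "rotate j v \<in> cyc_class y" for j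
  proof (cases "v = []")
    case False
    let ?L = "length v"
    have "k \<le> ?L * k"
      using False by (simp add: Suc_le_eq)
    then have "j + ?L * k - k + k = j + ?L * k"
      by arith
    then have "rotate (j + ?L * k - k) y = rotate (j + ?L * k) v"
      by (simp only: y rotate_rotate)
    also have "\<dots> = rotate j v"
      by (metis mod_mult_self1_is_0 mult.commute rotate_id rotate_rotate)
    finally show ?thesis
      unfolding cyc_class_def by (metis (mono_tags) mem_Collect_eq)
  qed (simp add: y mem_cyc_class_self)
  then show "cyc_class v \<subseteq> cyc_class y"
    unfolding cyc_class_def by blast
qed

lemma take_rotate1: "m \<le> length x \<Longrightarrow> take (m - 1) (rotate1 x) = drop 1 (take m x)"
  by (cases x) (auto simp: drop_take)

definition lie_classes :: "(nat \<Rightarrow> 'a) \<Rightarrow> nat \<Rightarrow> 'a list set set" where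
  "lie_classes w n = {C. \<exists>v. length v = n \<and> C = cyc_class v \<and> C \<subseteq> factors w}"

lemma lie_complexity_eq_card: "lie_complexity w n = card (lie_classes w n)"
  unfolding lie_complexity_def lie_classes_def ..

lemma lie_class_eq_cyc_class: "C \<in> lie_classes w n \<Longrightarrow> y \<in> C \<Longrightarrow> C = cyc_class y"
  unfolding lie_classes_def using cyc_class_eq by blast

lemma lie_class_subset: "C \<in> lie_classes w n \<Longrightarrow> C \<subseteq> factors_of_length w n"
  unfolding lie_classes_def factors_of_length_def using length_mem_cyc_class by blast

lemma finite_lie_classes: "finite (factors_of_length w n) \<Longrightarrow> finite (lie_classes w n)"
  by (meson Pow_iff finite_Pow_iff finite_subset lie_class_subset subsetI)

lemma take_lie_class_shift_closed:
  assumes "C \<in> lie_classes w n" "m \<le> n"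
  shows "take m ` C \<subseteq> factors_of_length w m \<and> take m ` C \<noteq> {} \<and> shift_closed m (take m ` C)"
proof (intro conjI)
  obtain v where v: "length v = n" "C = cyc_class v"
    using assms(1) unfolding lie_classes_def by blast
  show "take m ` C \<subseteq> factors_of_length w m"
    using lie_class_subset[OF assms(1)] assms(2) take_in_factors
    by (fastforce simp: factors_of_length_def)
  show "take m ` C \<noteq> {}"
    using mem_cyc_class_self v(2) by blast
  show "shift_closed m (take m ` C)"
    unfolding shift_closed_def
  proof
    fix z assume "z \<in> take m ` C"
    then obtain y where y: "y \<in> C" "z = take m y" by blast
    have "rotate1 y \<in> C"
      using rotate_mem_cyc_class[of y v 1] y(1) v(2) by simp
    moreover have "take (m - 1) (take m (rotate1 y)) = drop 1 z"
      using take_rotate1[of m y] length_mem_cyc_class[of y v] y v assms(2) by simp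
    ultimately show "\<exists>y\<in>take m ` C. take (m - 1) y = drop 1 z" by blast
  qed
qed

lemma lie_complexity_le_diff:
  assumes "1 \<le> n" "finite (factors_of_length w n)" "finite (factors_of_length w (n - 1))"
  shows "int (lie_complexity w n) \<le> int (factor_complexity w n) - int (factor_complexity w (n - 1)) + 1"
  unfolding lie_complexity_eq_card
proof (rule card_shift_closed_family_le[OF assms, where X = "\<lambda>C. take n ` C"])
  fix C assume "C \<in> lie_classes w n"
  then show "take n ` C \<subseteq> factors_of_length w n \<and> take n ` C \<noteq> {} \<and> shift_closed n (take n ` C)"
    by (rule take_lie_class_shift_closed) simp
next
  fix C D z assume C: "C \<in> lie_classes w n" and D: "D \<in> lie_classes w n"
    and "z \<in> take n ` C" "z \<in> take n ` D"
  then obtain x y where xy: "x \<in> C" "y \<in> D" "take n x = take n y" by blast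
  have "length x = n" "length y = n"
    using xy lie_class_subset[OF C] lie_class_subset[OF D] by (auto simp: factors_of_length_def)
  then have "x = y"
    using xy(3) by simp
  then show "C = D"
    using lie_class_eq_cyc_class C D xy by metis
qed

lemma periodic_mod:
  fixes f :: "nat \<Rightarrow> 'a"
  assumes "\<And>k. f (k + p) = f k" shows "f k = f (k mod p)"
proof -
  have "f (i + p * t) = f i" for i t
  proof (induction t)
    case (Suc t)
    then show ?case
      using assms[of "i + p * t"] by (simp add: algebra_simps)
  qed simp
  then show ?thesis
    by (metis mod_mult_div_eq mult.commute add.commute)
qed

text \<open>A weak form of the Fine--Wilf theorem.\<close>
lemma periodic_eq_if_agree:
  fixes f g :: "nat \<Rightarrow> 'a"
  assumes f: "\<And>k. f (k + p) = f k" and g: "\<And>k. g (k + q) = g k" and "0 < p" "0 < q"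
    and agree: "\<And>k. k < p + q \<Longrightarrow> f k = g k"
  shows "f = g"
proof -
  have g_p: "g (j + p) = g j" for j
  proof -
    have "j mod q + p < p + q"
      using \<open>0 < q\<close> by simp
    then have "g (j mod q + p) = g (j mod q)"
      using agree[of "j mod q + p"] agree[of "j mod q"] f[of "j mod q"] by simp
    then show ?thesis
      using periodic_mod[of g q, OF g] by (metis mod_add_left_eq)
  qed
  show ?thesis
  proof
    fix k
    have "k mod p < p + q"
      using \<open>0 < p\<close> by (simp add: trans_less_add1)
    then show "f k = g k"
      using agree periodic_mod[of f p, OF f] periodic_mod[of g p, OF g_p] by metis
  qed
qed

lemma rotate_fixed_periodic:
  assumes "rotate p x = x" "x \<noteq> []"
  shows "x ! ((k + p) mod length x) = x ! (k mod length x)"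
proof -
  have "x ! (k mod length x) = rotate p x ! (k mod length x)"
    using assms(1) by simp
  also have "\<dots> = x ! ((k + p) mod length x)"
    using assms(2) by (simp add: nth_rotate mod_add_right_eq add.commute)
  finally show ?thesis ..
qed

lemma rotate_fixed_eq_if_take_eq:
  assumes "length x = length y" "rotate p x = x" "rotate q y = y" "0 < p" "0 < q"
    and "p + q \<le> m" "m \<le> length x" "take m x = take m y"
  shows "x = y"
proof -
  let ?n = "length x"
  have ne: "x \<noteq> []" "y \<noteq> []"
    using assms(1,5-7) by auto
  have "(\<lambda>k. x ! (k mod ?n)) = (\<lambda>k. y ! (k mod ?n))"
  proof (rule periodic_eq_if_agree[where p = p and q = q])
    show "x ! ((k + p) mod ?n) = x ! (k mod ?n)" for k
      using rotate_fixed_periodic[OF assms(2) ne(1)] .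
    show "y ! ((k + q) mod ?n) = y ! (k mod ?n)" for k
      using rotate_fixed_periodic[OF assms(3) ne(2)] assms(1) by simp
    show "x ! (k mod ?n) = y ! (k mod ?n)" if "k < p + q" for k
      using that assms(6-8) nth_take[of k m x] nth_take[of k m y] by simp
  qed fact+
  then show ?thesis
    using assms(1) by (metis mod_less nth_equalityI)
qed

lemma rotate_fixed_mem_cyc_class:
  assumes "rotate p x = x" "y \<in> cyc_class x" shows "rotate p y = y"
proof -
  obtain k where "y = rotate k x"
    using assms(2) unfolding cyc_class_def by blast
  then show ?thesis
    using assms(1) by (metis rotate_rotate add.commute)
qed

lemma finite_cyc_class: "finite (cyc_class v)"
proof -
  have "cyc_class v \<subseteq> {xs. set xs \<subseteq> set v \<and> length xs = length v}"
    unfolding cyc_class_def by auto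
  then show ?thesis
    by (rule finite_subset) (simp add: finite_lists_length_eq)
qed

lemma finite_lie_class: "C \<in> lie_classes w n \<Longrightarrow> finite C"
  unfolding lie_classes_def using finite_cyc_class by blast

lemma card_cyc_class_ge:
  assumes "\<And>p. 0 < p \<Longrightarrow> p < q \<Longrightarrow> rotate p v \<noteq> v"
  shows "q \<le> card (cyc_class v)"
proof -
  have inj_rotate: "inj (rotate i :: 'a list \<Rightarrow> 'a list)" for i
    unfolding rotate_def by (rule inj_fn[OF inj_rotate1])
  have "inj_on (\<lambda>i. rotate i v) {..<q}"
  proof (rule linorder_inj_onI')
    fix i j assume ij: "i \<in> {..<q}" "j \<in> {..<q}" "i < j"
    show "rotate i v \<noteq> rotate j v"
    proof
      assume "rotate i v = rotate j v"
      then have "rotate i (rotate (j - i) v) = rotate i v"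
        using ij(3) by (simp add: rotate_rotate)
      then have "rotate (j - i) v = v"
        by (rule injD[OF inj_rotate])
      moreover have "0 < j - i" "j - i < q"
        using ij by auto
      ultimately show False
        using assms by blast
    qed
  qed
  moreover have "(\<lambda>i. rotate i v) ` {..<q} \<subseteq> cyc_class v"
    unfolding cyc_class_def by blast
  ultimately show ?thesis
    using card_inj_on_le[OF _ _ finite_cyc_class] by fastforce
qed

definition has_short_period :: "nat \<Rightarrow> 'a list set \<Rightarrow> bool" where
  "has_short_period n C \<longleftrightarrow> (\<exists>x\<in>C. \<exists>p. 0 < p \<and> 4 * p \<le> n \<and> rotate p x = x)"

lemma short_period_mem_lie_class:
  assumes "C \<in> lie_classes w n" "has_short_period n C" "y \<in> C"
  obtains p where "0 < p" "4 * p \<le> n" "rotate p y = y"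
proof -
  obtain x p where "x \<in> C" "0 < p" "4 * p \<le> n" "rotate p x = x"
    using assms(2) unfolding has_short_period_def by blast
  then show thesis
    using that rotate_fixed_mem_cyc_class lie_class_eq_cyc_class assms(1,3) by metis
qed

lemma card_short_period_classes_le_diff:
  assumes "1 \<le> m" "m \<le> n" "n \<le> 2 * m"
    "finite (factors_of_length w m)" "finite (factors_of_length w (m - 1))"
  shows "int (card {C \<in> lie_classes w n. has_short_period n C})
           \<le> int (factor_complexity w m) - int (factor_complexity w (m - 1)) + 1"
proof (rule card_shift_closed_family_le[OF assms(1,4,5), where X = "\<lambda>C. take m ` C"])
  fix C assume "C \<in> {C \<in> lie_classes w n. has_short_period n C}"
  then show "take m ` C \<subseteq> factors_of_length w m \<and> take m ` C \<noteq> {} \<and> shift_closed m (take m ` C)"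
    using take_lie_class_shift_closed[OF _ assms(2)] by blast
next
  fix C D z assume C: "C \<in> {C \<in> lie_classes w n. has_short_period n C}"
    and D: "D \<in> {C \<in> lie_classes w n. has_short_period n C}"
    and "z \<in> take m ` C" "z \<in> take m ` D"
  then obtain x y where xy: "x \<in> C" "y \<in> D" "take m x = take m y" by blast
  obtain p where p: "0 < p" "4 * p \<le> n" "rotate p x = x"
    using C xy(1) short_period_mem_lie_class by blast
  obtain q where q: "0 < q" "4 * q \<le> n" "rotate q y = y"
    using D xy(2) short_period_mem_lie_class by blast
  have "length x = n" "length y = n"
    using xy(1,2) C D lie_class_subset by (fastforce simp: factors_of_length_def)+
  then have "x = y"
    using rotate_fixed_eq_if_take_eq[OF _ p(3) q(3) p(1) q(1) _ _ xy(3)] p(2) q(2) assms(2,3)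
    by simp
  then show "C = D"
    using lie_class_eq_cyc_class C D xy by blast
qed

lemma card_short_period_classes_bound:
  assumes "1 \<le> k" "k \<le> n" "n \<le> 2 * k" "\<And>m. finite (factors_of_length w m)"
  shows "(n + 1 - k) * card {C \<in> lie_classes w n. has_short_period n C}
           \<le> factor_complexity w n + (n + 1 - k)"
proof -
  let ?s = "int (card {C \<in> lie_classes w n. has_short_period n C})"
  let ?p = "\<lambda>m. int (factor_complexity w m)"
  have "?s \<le> ?p (Suc i) - ?p i + 1" if "i \<in> {k - 1..<n}" for i
  proof -
    have "1 \<le> Suc i" "Suc i \<le> n" "n \<le> 2 * Suc i"
      using that assms(1,3) by auto
    then show ?thesis
      using card_short_period_classes_le_diff[of "Suc i" n w] assms(4) by simp
  qed
  then have "(\<Sum>i = k - 1..<n. ?s) \<le> (\<Sum>i = k - 1..<n. ?p (Suc i) - ?p i + 1)"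
    by (rule sum_mono)
  also have "\<dots> = ?p n - ?p (k - 1) + int (n + 1 - k)"
    using assms(1,2) sum_Suc_diff'[of "k - 1" n ?p] by (simp add: sum.distrib)
  finally have "int (n + 1 - k) * ?s \<le> ?p n + int (n + 1 - k)"
    using assms(1,2) by simp
  then show ?thesis
    by (simp flip: of_nat_mult of_nat_add)
qed

lemma card_long_period_lie_class:
  assumes "C \<in> lie_classes w n" "\<not> has_short_period n C"
  shows "n < 4 * card C"
proof -
  obtain v where v: "length v = n" "C = cyc_class v"
    using assms(1) unfolding lie_classes_def by blast
  have "n div 4 + 1 \<le> card C"
    unfolding v(2)
  proof (rule card_cyc_class_ge)
    fix p assume "0 < p" "p < n div 4 + 1"
    moreover from this have "4 * p \<le> n"
      using less_eq_div_iff_mult_less_eq[of 4 p n] by simp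
    ultimately show "rotate p v \<noteq> v"
      using assms(2) mem_cyc_class_self[of v] v(2) unfolding has_short_period_def by auto
  qed
  then show ?thesis by linarith
qed

lemma card_long_period_classes_bound:
  assumes "finite (factors_of_length w n)"
  shows "n * card {C \<in> lie_classes w n. \<not> has_short_period n C} \<le> 4 * factor_complexity w n"
proof -
  let ?B = "{C \<in> lie_classes w n. \<not> has_short_period n C}"
  have finite: "finite C" if "C \<in> ?B" for C
    using that finite_lie_class by blast
  have disjoint: "pairwise disjnt ?B"
    unfolding pairwise_def disjnt_def using lie_class_eq_cyc_class by blast
  have "n * card ?B = (\<Sum>C\<in>?B. n)"
    by simp
  also have "\<dots> \<le> (\<Sum>C\<in>?B. 4 * card C)"
  proof (rule sum_mono)
    fix C assume "C \<in> ?B"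
    then show "n \<le> 4 * card C"
      using card_long_period_lie_class[of C w n] by simp
  qed
  also have "\<dots> = 4 * card (\<Union>?B)"
    using card_Union_disjoint[OF disjoint finite] by (simp add: sum_distrib_left)
  also have "card (\<Union>?B) \<le> factor_complexity w n"
    unfolding factor_complexity_eq_card using assms lie_class_subset by (intro card_mono) blast+
  finally show ?thesis by simp
qed

lemma linear_factor_complexity_bound:
  assumes "linear_factor_complexity w"
  obtains M :: nat where "\<And>n. 1 \<le> n \<Longrightarrow> factor_complexity w n \<le> M * n"
proof -
  obtain A B :: real where AB: "\<And>n. real (factor_complexity w n) \<le> A * real n + B"
    using assms unfolding linear_factor_complexity_def by blast
  define M where "M = nat \<lceil>\<bar>A\<bar> + \<bar>B\<bar>\<rceil>"
  have "factor_complexity w n \<le> M * n" if "1 \<le> n" for n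
  proof -
    have "A * real n \<le> \<bar>A\<bar> * real n"
      by (rule mult_right_mono) simp_all
    moreover have "B \<le> \<bar>B\<bar> * real n"
      using that mult_left_mono[of 1 "real n" "\<bar>B\<bar>"] by simp
    moreover have "(\<bar>A\<bar> + \<bar>B\<bar>) * real n \<le> real M * real n"
      unfolding M_def by (rule mult_right_mono) linarith+
    ultimately have "real (factor_complexity w n) \<le> real (M * n)"
      using AB[of n] by (simp add: distrib_right)
    then show ?thesis
      by (simp only: of_nat_le_iff)
  qed
  then show thesis by (rule that)
qed

lemma lie_complexity_0: "lie_complexity w 0 \<le> 1"
proof -
  have "lie_classes w 0 \<subseteq> {cyc_class []}"
    unfolding lie_classes_def by auto
  then have "card (lie_classes w 0) \<le> card {cyc_class ([] :: 'a list)}"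
    by (rule card_mono[rotated]) simp
  then show ?thesis
    unfolding lie_complexity_eq_card by simp
qed

lemma lie_complexity_eq_card_short_add_long:
  assumes "finite (factors_of_length w n)"
  shows "lie_complexity w n = card {C \<in> lie_classes w n. has_short_period n C}
                            + card {C \<in> lie_classes w n. \<not> has_short_period n C}"
proof -
  let ?S = "{C \<in> lie_classes w n. has_short_period n C}"
    and ?L = "{C \<in> lie_classes w n. \<not> has_short_period n C}"
  have "lie_classes w n = ?S \<union> ?L"
    by auto
  moreover have "card (?S \<union> ?L) = card ?S + card ?L"
    using finite_lie_classes[OF assms] by (intro card_Un_disjoint) auto
  ultimately show ?thesis
    unfolding lie_complexity_eq_card by simp
qed

lemma card_short_period_classes_le_linear:
  assumes fin: "\<And>m. finite (factors_of_length w m)" and "1 \<le> n"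
    and M: "factor_complexity w n \<le> M * n"
  shows "card {C \<in> lie_classes w n. has_short_period n C} \<le> 2 * M + 1"
proof -
  define N where "N = n + 1 - (n + 1) div 2"
  have N: "0 < N" "n \<le> 2 * N"
    unfolding N_def by auto
  have k: "1 \<le> (n + 1) div 2" "(n + 1) div 2 \<le> n" "n \<le> 2 * ((n + 1) div 2)"
    using assms(2) by auto
  have "N * card {C \<in> lie_classes w n. has_short_period n C} \<le> factor_complexity w n + N"
    using card_short_period_classes_bound[OF k fin] unfolding N_def .
  also have "\<dots> \<le> M * n + N"
    using M by simp
  also have "\<dots> \<le> N * (2 * M + 1)"
    using mult_le_mono2[OF N(2), of M] by (simp add: algebra_simps)
  finally show ?thesis
    using N(1) by (simp only: mult_le_cancel1)
qed

lemma card_long_period_classes_le_linear: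
  assumes "finite (factors_of_length w n)" "1 \<le> n"
    and M: "factor_complexity w n \<le> M * n"
  shows "card {C \<in> lie_classes w n. \<not> has_short_period n C} \<le> 4 * M"
proof -
  have "n * card {C \<in> lie_classes w n. \<not> has_short_period n C} \<le> 4 * factor_complexity w n"
    using card_long_period_classes_bound[OF assms(1)] .
  also have "\<dots> \<le> 4 * (M * n)"
    using M by simp
  also have "\<dots> = n * (4 * M)"
    by simp
  finally show ?thesis
    using assms(2) by (simp only: mult_le_cancel1)
qed

lemma lie_complexity_bounded:
  assumes fin: "\<And>m. finite (factors_of_length w m)" and "linear_factor_complexity w"
  shows "\<exists>K. \<forall>n. lie_complexity w n \<le> K"
proof -
  obtain M where M: "\<And>n. 1 \<le> n \<Longrightarrow> factor_complexity w n \<le> M * n"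
    using linear_factor_complexity_bound[OF assms(2)] by blast
  have "lie_complexity w n \<le> 6 * M + 1" for n
  proof (cases "n = 0")
    case True
    then show ?thesis using lie_complexity_0[of w] by simp
  next
    case False
    then have "1 \<le> n" by simp
    then show ?thesis
      using lie_complexity_eq_card_short_add_long[OF fin]
        card_short_period_classes_le_linear[OF fin _ M] card_long_period_classes_le_linear[OF fin _ M]
      by fastforce
  qed
  then show ?thesis by blast
qed

theorem theorem1:
  fixes \<Sigma> :: "'a set" and w :: "nat \<Rightarrow> 'a"
  assumes "finite \<Sigma>" and "\<forall>i. w i \<in> \<Sigma>"
  shows "(\<forall>n\<ge>1. int (lie_complexity w n)
            \<le> int (factor_complexity w n) - int (factor_complexity w (n - 1)) + 1)
         \<and> (linear_factor_complexity w \<longrightarrow> (\<exists>K. \<forall>n. lie_complexity w n \<le> K))"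
proof -
  have fin: "\<And>m. finite (factors_of_length w m)"
    using finite_factors_of_length[OF assms] .
  show ?thesis
    using lie_complexity_le_diff[OF _ fin fin] lie_complexity_bounded[OF fin] by blast
qed

end
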